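(* Let $\mathbf{u}$ be the functional $\langle\mathbf{u},p\rangle=\int_{-1}^1p(x)(1-x^2)^{1/2}dx$, with monic orthogonal polynomials $(U_n)$ (monic Chebyshev polynomials of the second kind, $xU_n=U_{n+1}+\frac14U_{n-1}$, $U_{-1}=0$, $U_0=1$). Then its inverse $\mathbf{u}^{-1}$ is given by $$\langle\mathbf{u}^{-1},p\rangle=-\frac{1}{\pi^2}\int_{-1}^1\frac{p(x)-p(0)-p'(0)x}{x^2}(1-x^2)^{1/2}dx+\frac{2}{\pi}p(0),$$ it is quasi-definite, and its monic orthogonal polynomials are $U^-_0=1$, $U^-_1=x$, $U^-_n=U_n+\alpha_nU_{n-2}$ for $n\ge2$ with $\alpha_n=\frac{n+2}{4n}$ if $n$ is even and $\alpha_n=\frac14$ if $n$ is odd. They satisfy $xU^-_n=U^-_{n+1}+a^-_nU^-_{n-1}$ with $a^-_1=-\frac14$, $a^-_n=\frac{n+2}{4n}$ for even $n\ge2$, and $a^-_n=\frac{n-1}{4(n+1)}$ for odd $n\ge3$. Moreover $\mathcal{S}_{\mathbf{u}^{-1}}(z)=\frac{2}{\pi z}-\frac{1}{\pi^2z^2}\mathcal{S}_{\mathbf{u}}(z)$.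
   Context: Moments $\mathbf{u}_n=\langle\mathbf{u},x^n\rangle$. The inverse $\mathbf{u}^{-1}$ is the functional with moments $(\mathbf{u}^{-1})_0=1/\mathbf{u}_0$, $(\mathbf{u}^{-1})_n=-\frac{1}{\mathbf{u}_0}\sum_{k=0}^{n-1}\mathbf{u}_{n-k}(\mathbf{u}^{-1})_k$ ($n\ge1$). Quasi-definite: all leading principal submatrices of the Hankel moment matrix nonsingular. Stieltjes function: formal series $\mathcal{S}_{\mathbf{u}}(z)=\sum_{n\ge0}\mathbf{u}_nz^{-n-1}$. *)

theory Defs
  imports "HOL-Analysis.Analysis" "HOL-Computational_Algebra.Polynomial"
    "HOL-Computational_Algebra.Formal_Power_Series" "Jordan_Normal_Form.Determinant"
begin

text \<open>A linear functional on real polynomials is identified with its moment sequence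
  m n = <u, x^n>; it acts on a polynomial by linearity.\<close>
definition fpair :: "(nat \<Rightarrow> real) \<Rightarrow> real poly \<Rightarrow> real" where
  "fpair m p = (\<Sum>k\<le>degree p. coeff p k * m k)"

definition cheb_mom :: "nat \<Rightarrow> real" where
  "cheb_mom n = integral {-1..1} (\<lambda>x. x ^ n * sqrt (1 - x\<^sup>2))"

fun inv_mom :: "(nat \<Rightarrow> real) \<Rightarrow> nat \<Rightarrow> real" where
  "inv_mom m 0 = 1 / m 0"
| "inv_mom m (Suc n) = - (1 / m 0) * (\<Sum>k\<le>n. m (Suc n - k) * inv_mom m k)"

definition quasi_definite :: "(nat \<Rightarrow> real) \<Rightarrow> bool" where
  "quasi_definite m \<longleftrightarrow>
     (\<forall>n. Determinant.det (Matrix.mat (Suc n) (Suc n) (\<lambda>(i, j). m (i + j))) \<noteq> 0)"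

definition is_MOPS :: "(nat \<Rightarrow> real) \<Rightarrow> (nat \<Rightarrow> real poly) \<Rightarrow> bool" where
  "is_MOPS m P \<longleftrightarrow>
     (\<forall>n. degree (P n) = n \<and> lead_coeff (P n) = 1) \<and>
     (\<forall>n k. n \<noteq> k \<longrightarrow> fpair m (P n * P k) = 0) \<and>
     (\<forall>n. fpair m (P n * P n) \<noteq> 0)"

fun chebU :: "nat \<Rightarrow> real poly" where
  "chebU 0 = 1"
| "chebU (Suc 0) = [:0, 1:]"
| "chebU (Suc (Suc n)) = [:0, 1:] * chebU (Suc n) - Polynomial.smult (1/4) (chebU n)"

definition alpha_m :: "nat \<Rightarrow> real" where
  "alpha_m n = (if even n then (real n + 2) / (4 * real n) else 1/4)"

definition chebU_inv :: "nat \<Rightarrow> real poly" where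
  "chebU_inv n = (if n = 0 then 1 else if n = 1 then [:0, 1:]
                  else chebU n + Polynomial.smult (alpha_m n) (chebU (n - 2)))"

definition a_m :: "nat \<Rightarrow> real" where
  "a_m n = (if n = 1 then -1/4 else if even n then (real n + 2) / (4 * real n)
            else (real n - 1) / (4 * (real n + 1)))"

text \<open>Stieltjes function S(z) = sum m_n z^(-n-1), as a formal power series in w = 1/z.\<close>
definition stieltjes :: "(nat \<Rightarrow> real) \<Rightarrow> real fps" where
  "stieltjes m = Abs_fps (\<lambda>k. if k = 0 then 0 else m (k - 1))"

end

(*
  The weight w x = sqrt (1 - x^2) satisfies the Pearson equation ((1 - x^2) w)' = -3 x w, so
  u((1 - x^2) p' - 3 x p) = 0 for every polynomial p.  On monomials this is the recurrence
  (n + 4) u_(n+2) = (n + 1) u_n, whence u_(2k) = pi (-1)^k (1/2 choose k+1) and u_(2k+1) = 0, and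
  Vandermonde's identity for (1/2 choose -) shows that 2/pi, 0, -u_0/pi^2, -u_1/pi^2, ... solves the
  convolution equation defining the moments of the inverse.

  Applied to p = U_(n+1), the Pearson equation gives u(U_n) = 0 for n >= 1, and from this one computes
  u^-1(U^-_n) = 0 for n >= 1.  Together with the three-term recurrence, a Favard-type induction then
  gives u^-1(x^j U^-_n) = 0 for j < n and u^-1(x^n U^-_n) = a^-_1 ... a^-_n 2/pi, which is nonzero.
  Finally, any monic orthogonal sequence forces quasi-definiteness: a kernel vector of a Hankel
  matrix would give a nonzero polynomial q orthogonal to 1, ..., x^(deg q), although q pairs with
  P_(deg q) to a nonzero multiple of its norm.
*)

theory Submission
  imports Defs
begin

lemma nat_0_1_or_Suc_Suc:
  obtains "n = 0" | "n = 1" | k where "n = Suc (Suc k)"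
  by (metis One_nat_def not0_implies_Suc)

section \<open>Polynomials and linear functionals on them\<close>

lemma poly_shift_add: "poly_shift k (p + q) = poly_shift k p + poly_shift k q"
  by (simp add: poly_eq_iff coeff_poly_shift)

lemma poly_shift_diff: "poly_shift k (p - q) = poly_shift k p - poly_shift k (q :: 'a :: ab_group_add poly)"
  by (simp add: poly_eq_iff coeff_poly_shift)

lemma poly_shift_smult: "poly_shift k (Polynomial.smult c p) = Polynomial.smult c (poly_shift k p)"
  by (simp add: poly_eq_iff coeff_poly_shift)

lemma poly_shift_Suc_X_mult:
  "poly_shift (Suc k) ([:0, 1:] * p) = poly_shift k (p :: 'a :: comm_semiring_1 poly)"
  by (simp add: poly_eq_iff coeff_poly_shift)

lemma poly_eq_poly_shift_2:
  fixes p :: "'a :: comm_semiring_1 poly"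
  shows "poly p x = coeff p 0 + coeff p 1 * x + x\<^sup>2 * poly (poly_shift 2 p) x"
proof -
  have "p = pCons (coeff p 0) (pCons (coeff p 1) (poly_shift 2 p))"
    by (simp add: poly_eq_iff coeff_pCons coeff_poly_shift split: nat.split)
  then have "poly p x = poly (pCons (coeff p 0) (pCons (coeff p 1) (poly_shift 2 p))) x"
    by (rule arg_cong)
  also have "\<dots> = coeff p 0 + coeff p 1 * x + x\<^sup>2 * poly (poly_shift 2 p) x"
    by (simp add: algebra_simps power2_eq_square)
  finally show ?thesis .
qed

lemma fpair_eq_sum_atMost:
  assumes "degree p \<le> N"
  shows "fpair m p = (\<Sum>k\<le>N. coeff p k * m k)"
  unfolding fpair_def using assms
  by (intro sum.mono_neutral_left) (auto simp: coeff_eq_0)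

lemma fpair_add: "fpair m (p + q) = fpair m p + fpair m q"
proof -
  have "degree (p + q) \<le> max (degree p) (degree q)"
    by (rule degree_add_le) auto
  then show ?thesis
    by (simp add: fpair_eq_sum_atMost[of _ "max (degree p) (degree q)"] sum.distrib algebra_simps)
qed

lemma fpair_smult: "fpair m (Polynomial.smult c p) = c * fpair m p"
  by (simp add: fpair_eq_sum_atMost[of "Polynomial.smult c p" "degree p"] fpair_def sum_distrib_left
      algebra_simps)

lemma fpair_0 [simp]: "fpair m 0 = 0"
  by (simp add: fpair_def)

lemma fpair_diff: "fpair m (p - q) = fpair m p - fpair m q"
  using fpair_add[of m "p - q" q] by simp

lemma fpair_sum: "fpair m (\<Sum>i\<in>A. f i) = (\<Sum>i\<in>A. fpair m (f i))"
  by (induction A rule: infinite_finite_induct) (auto simp: fpair_add)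

lemma fpair_monom: "fpair m (monom c k) = c * m k"
proof -
  have "fpair m (monom c k) = (\<Sum>j\<le>k. if j = k then c * m k else 0)"
    by (rule trans[OF fpair_eq_sum_atMost[OF degree_monom_le] sum.cong]) (auto simp: coeff_monom)
  then show ?thesis
    by simp
qed

lemma fpair_1 [simp]: "fpair m 1 = m 0"
  by (simp add: fpair_def)

lemma fpair_X [simp]: "fpair m [:0, 1:] = m 1"
  by (simp add: fpair_def)

lemma linear_poly_functional_eq_0:
  fixes F :: "real poly \<Rightarrow> real"
  assumes add: "\<And>p q. F (p + q) = F p + F q"
    and smult: "\<And>c p. F (Polynomial.smult c p) = c * F p"
    and monom: "\<And>k. F (monom 1 k) = 0"
  shows "F p = 0"
proof -
  have "F (monom c i) = 0" for c i
    using smult[of c "monom 1 i"] by (simp add: smult_monom monom)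
  then have "F (\<Sum>i\<in>A. monom (coeff p i) i) = 0" for A :: "nat set"
    by (induction A rule: infinite_finite_induct) (use smult[of 0 0] in \<open>auto simp: add\<close>)
  then show ?thesis
    by (metis poly_as_sum_of_monoms)
qed

lemma fpair_mult_expand:
  "fpair m (p * q) = (\<Sum>i\<le>degree p. coeff p i * fpair m (monom 1 i * q))"
proof -
  have "p * q = (\<Sum>i\<le>degree p. Polynomial.smult (coeff p i) (monom 1 i * q))"
    by (subst (1) poly_as_sum_of_monoms[symmetric])
      (simp add: sum_distrib_right smult_monom smult_monom_mult)
  then show ?thesis
    by (simp add: fpair_sum fpair_smult)
qed

section \<open>Monic orthogonal polynomial sequences\<close>

lemma is_MOPS_orthogonal_low:
  assumes mops: "is_MOPS m P" and q: "\<forall>k\<ge>n. coeff q k = 0"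
  shows "fpair m (q * P n) = 0"
proof -
  have "\<forall>q. (\<forall>k\<ge>j. coeff q k = 0) \<longrightarrow> fpair m (q * P n) = 0" if "j \<le> n" for j
    using that
  proof (induction j)
    case 0
    then show ?case
      by (metis fpair_0 le0 mult_zero_left coeff_0 poly_eqI)
  next
    case (Suc j)
    show ?case
    proof (intro allI impI)
      fix q :: "real poly"
      assume q: "\<forall>k\<ge>Suc j. coeff q k = 0"
      define r where "r = q - Polynomial.smult (coeff q j) (P j)"
      have "degree (P j) = j" "coeff (P j) j = 1"
        using mops by (metis is_MOPS_def)+
      have "\<forall>k\<ge>j. coeff r k = 0"
      proof (intro allI impI)
        fix k
        assume "j \<le> k"
        then consider "k = j" | "Suc j \<le> k"
          by linarith
        then show "coeff r k = 0"
          by cases (use q \<open>degree (P j) = j\<close> \<open>coeff (P j) j = 1\<close> in \<open>auto simp: r_def coeff_eq_0\<close>)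
      qed
      then have "fpair m (r * P n) = 0"
        using Suc by simp
      moreover have "fpair m (P j * P n) = 0"
        using mops Suc.prems by (simp add: is_MOPS_def)
      moreover have "q * P n = Polynomial.smult (coeff q j) (P j * P n) + r * P n"
        by (simp add: r_def algebra_simps)
      ultimately show "fpair m (q * P n) = 0"
        by (simp add: fpair_add fpair_smult)
    qed
  qed
  then show ?thesis
    using q by blast
qed

lemma is_MOPS_leading:
  assumes mops: "is_MOPS m P" and "degree q \<le> n"
  shows "fpair m (q * P n) = coeff q n * fpair m (P n * P n)"
proof -
  define r where "r = q - Polynomial.smult (coeff q n) (P n)"
  have "degree (P n) = n" "coeff (P n) n = 1"
    using mops by (metis is_MOPS_def)+
  then have "\<forall>k\<ge>n. coeff r k = 0"
    using assms(2) by (auto simp: r_def le_less coeff_eq_0)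
  then have "fpair m (r * P n) = 0"
    by (rule is_MOPS_orthogonal_low[OF mops])
  moreover have "q * P n = Polynomial.smult (coeff q n) (P n * P n) + r * P n"
    by (simp add: r_def algebra_simps)
  ultimately show ?thesis
    by (simp add: fpair_add fpair_smult)
qed

lemma fpair_monom_mult_hankel_kernel:
  assumes "v \<in> carrier_vec (Suc n)" and "Matrix.mat (Suc n) (Suc n) (\<lambda>(i, j). m (i + j)) *\<^sub>v v = 0\<^sub>v (Suc n)"
    and "i \<le> n"
  shows "fpair m (monom 1 i * (\<Sum>j<Suc n. monom (v $ j) j)) = 0"
proof -
  have "fpair m (monom 1 i * (\<Sum>j<Suc n. monom (v $ j) j)) = (\<Sum>j<Suc n. v $ j * m (i + j))"
    by (simp only: sum_distrib_left mult_monom fpair_sum fpair_monom) simp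
  also have "\<dots> = (Matrix.mat (Suc n) (Suc n) (\<lambda>(i, j). m (i + j)) *\<^sub>v v) $ i"
    using assms(1,3) by (simp add: scalar_prod_def atLeast0LessThan mult.commute)
  finally show ?thesis
    using assms(2,3) by simp
qed

lemma is_MOPS_imp_quasi_definite:
  assumes mops: "is_MOPS m P"
  shows "quasi_definite m"
  unfolding quasi_definite_def
proof
  fix n
  let ?H = "Matrix.mat (Suc n) (Suc n) (\<lambda>(i, j). m (i + j))"
  show "Determinant.det ?H \<noteq> 0"
  proof
    assume "Determinant.det ?H = 0"
    then obtain v where v: "v \<in> carrier_vec (Suc n)" "v \<noteq> 0\<^sub>v (Suc n)" "?H *\<^sub>v v = 0\<^sub>v (Suc n)"
      using det_0_iff_vec_prod_zero_field[of ?H "Suc n"] by auto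
    define q where "q = (\<Sum>j<Suc n. monom (v $ j) j)"
    have coeff_q: "coeff q k = (if k < Suc n then v $ k else 0)" for k
      by (simp add: q_def coeff_sum coeff_monom)
    have "q \<noteq> 0"
    proof
      assume "q = 0"
      then have "v $ k = 0" if "k < Suc n" for k
        using coeff_q[of k] that by simp
      then have "v = 0\<^sub>v (Suc n)"
        using v(1) by (metis carrier_vecD eq_vecI index_zero_vec(1,2))
      with v(2) show False ..
    qed
    define d where "d = degree q"
    have "d \<le> n"
      unfolding d_def by (rule degree_le) (simp add: coeff_q)
    have "degree (P d) = d"
      using mops by (simp add: is_MOPS_def)
    then have "fpair m (P d * q) = 0"
      using \<open>d \<le> n\<close> fpair_monom_mult_hankel_kernel[OF v(1) v(3)]
      by (simp add: fpair_mult_expand[of m "P d"] q_def)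
    moreover have "fpair m (q * P d) = lead_coeff q * fpair m (P d * P d)"
      unfolding d_def by (rule is_MOPS_leading[OF mops order_refl])
    moreover have "fpair m (P d * P d) \<noteq> 0"
      using mops by (simp add: is_MOPS_def)
    ultimately show False
      using \<open>q \<noteq> 0\<close> by (simp add: mult.commute)
  qed
qed

lemma recurrence_monom_moments:
  fixes P :: "nat \<Rightarrow> real poly" and a :: "nat \<Rightarrow> real"
  assumes P0: "P 0 = 1" and P1: "[:0, 1:] * P 0 = P 1"
    and rec: "\<forall>n\<ge>1. [:0, 1:] * P n = P (Suc n) + Polynomial.smult (a n) (P (n - 1))"
    and vanish: "\<And>n. n \<ge> 1 \<Longrightarrow> fpair m (P n) = 0"
  shows "j < n \<Longrightarrow> fpair m (monom 1 j * P n) = 0"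
    and "fpair m (monom 1 n * P n) = (\<Prod>j = 1..n. a j) * m 0"
proof -
  have shift: "monom 1 (Suc j) * P n = monom 1 j * P (Suc n)
      + Polynomial.smult (if n = 0 then 0 else a n) (monom 1 j * P (n - 1))" for j n
  proof -
    have "monom 1 (Suc j) * P n = monom 1 j * ([:0, 1:] * P n)"
      by (simp add: monom_Suc)
    also have "[:0, 1:] * P n = P (Suc n) + Polynomial.smult (if n = 0 then 0 else a n) (P (n - 1))"
      using rec P1 by (cases "n = 0") auto
    finally show ?thesis
      by (simp add: distrib_left)
  qed
  have low: "\<forall>n>j. fpair m (monom 1 j * P n) = 0" for j
  proof (induction j)
    case 0
    then show ?case
      using vanish by (simp add: monom_0 one_pCons[symmetric])
  next
    case (Suc j)
    then show ?case
      by (simp add: shift fpair_add fpair_smult)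
  qed
  then show "j < n \<Longrightarrow> fpair m (monom 1 j * P n) = 0"
    by blast
  show "fpair m (monom 1 n * P n) = (\<Prod>j = 1..n. a j) * m 0"
  proof (induction n)
    case 0
    then show ?case
      using P0 by (simp add: monom_0 one_pCons[symmetric])
  next
    case (Suc n)
    then show ?case
      using low by (simp add: shift fpair_add fpair_smult prod.nat_ivl_Suc')
  qed
qed

lemma is_MOPS_of_recurrence:
  fixes P :: "nat \<Rightarrow> real poly" and a :: "nat \<Rightarrow> real"
  assumes monic: "\<And>n. degree (P n) = n \<and> lead_coeff (P n) = 1"
    and P0: "P 0 = 1" and P1: "[:0, 1:] * P 0 = P 1"
    and rec: "\<forall>n\<ge>1. [:0, 1:] * P n = P (Suc n) + Polynomial.smult (a n) (P (n - 1))"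
    and vanish: "\<And>n. n \<ge> 1 \<Longrightarrow> fpair m (P n) = 0"
    and a_nonzero: "\<And>n. n \<ge> 1 \<Longrightarrow> a n \<noteq> 0" and "m 0 \<noteq> 0"
  shows "is_MOPS m P"
proof -
  note moments = recurrence_monom_moments[OF P0 P1 rec vanish]
  have lower: "fpair m (P k * P n) = 0" if "k < n" for k n
    using monic[of k] that by (simp add: fpair_mult_expand[of m "P k"] moments(1))
  have "fpair m (P n * P n) = fpair m (monom 1 n * P n)" for n
    using monic[of n] by (auto simp: fpair_mult_expand[of m "P n"] moments(1) lessThan_Suc_atMost[symmetric])
  moreover have "(\<Prod>j = 1..n. a j) \<noteq> 0" for n
    using a_nonzero by simp
  ultimately have "fpair m (P n * P n) \<noteq> 0" for n
    using \<open>m 0 \<noteq> 0\<close> by (simp add: moments(2))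
  moreover have "fpair m (P n * P k) = 0" if "n \<noteq> k" for n k
    using lower[of n k] lower[of k n] that by (cases "n < k") (auto simp: mult.commute)
  ultimately show ?thesis
    unfolding is_MOPS_def using monic by blast
qed

section \<open>The Chebyshev functional\<close>

lemma fpair_cheb_mom_eq_integral:
  "fpair cheb_mom q = integral {-1..1} (\<lambda>x. poly q x * sqrt (1 - x\<^sup>2))"
proof -
  define I where "I q = integral {-1..1} (\<lambda>x. poly q x * sqrt (1 - x\<^sup>2))" for q
  have integrable: "(\<lambda>x. poly q x * sqrt (1 - x\<^sup>2)) integrable_on {-1..1}" for q
    by (intro integrable_continuous_interval continuous_intros)
  have add: "I (p + q) = I p + I q" for p q
    unfolding I_def by (simp add: distrib_right integral_add[OF integrable integrable])
  have smult: "I (Polynomial.smult c p) = c * I p" for c p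
    unfolding I_def by (simp add: mult.assoc)
  have monom: "I (monom 1 k) = cheb_mom k" for k
    unfolding I_def cheb_mom_def by (simp add: poly_monom)
  have "fpair cheb_mom q - I q = 0"
    by (rule linear_poly_functional_eq_0[of "\<lambda>q. fpair cheb_mom q - I q"])
      (simp_all add: fpair_add fpair_smult fpair_monom add smult monom algebra_simps)
  then show ?thesis
    by (simp add: I_def)
qed

lemma has_real_derivative_cheb_weight_cubed:
  assumes "-1 < x" "x < (1::real)"
  shows "((\<lambda>x. (1 - x\<^sup>2) * sqrt (1 - x\<^sup>2)) has_real_derivative -3 * x * sqrt (1 - x\<^sup>2)) (at x)"
proof -
  have pos: "0 < 1 - x\<^sup>2"
    using assms by (simp add: abs_square_less_1)
  have "((\<lambda>x. sqrt (1 - x\<^sup>2)) has_real_derivative inverse (sqrt (1 - x\<^sup>2)) / 2 * (- (2 * x))) (at x)"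
    using pos by (auto intro!: DERIV_real_sqrt derivative_eq_intros DERIV_chain2[where f = sqrt])
  then have "((\<lambda>x. (1 - x\<^sup>2) * sqrt (1 - x\<^sup>2)) has_real_derivative
      - (2 * x) * sqrt (1 - x\<^sup>2) + (1 - x\<^sup>2) * (inverse (sqrt (1 - x\<^sup>2)) / 2 * - (2 * x))) (at x)"
    using pos by (auto intro!: derivative_eq_intros)
  also have "- (2 * x) * sqrt (1 - x\<^sup>2) + (1 - x\<^sup>2) * (inverse (sqrt (1 - x\<^sup>2)) / 2 * - (2 * x))
      = -3 * x * sqrt (1 - x\<^sup>2)"
    using pos by (simp add: field_simps flip: real_sqrt_pow2)
  finally show ?thesis .
qed

lemma cheb_mom_pearson:
  "fpair cheb_mom ([:1, 0, -1:] * pderiv p - Polynomial.smult 3 ([:0, 1:] * p)) = 0"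
proof -
  let ?q = "[:1, 0, -1:] * pderiv p - Polynomial.smult 3 ([:0, 1:] * p)"
  define G where "G x = poly p x * ((1 - x\<^sup>2) * sqrt (1 - x\<^sup>2))" for x :: real
  have "((\<lambda>x. poly ?q x * sqrt (1 - x\<^sup>2)) has_integral G 1 - G (-1)) {-1..1}"
  proof (rule fundamental_theorem_of_calculus_interior)
    show "continuous_on {-1..1} G"
      unfolding G_def by (intro continuous_intros)
    fix x :: real
    assume "x \<in> {-1<..<1}"
    then have "(G has_real_derivative
        poly p x * (-3 * x * sqrt (1 - x\<^sup>2)) + poly (pderiv p) x * ((1 - x\<^sup>2) * sqrt (1 - x\<^sup>2))) (at x)"
      unfolding G_def by (intro DERIV_mult' poly_DERIV has_real_derivative_cheb_weight_cubed) auto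
    moreover have "poly p x * (-3 * x * sqrt (1 - x\<^sup>2)) + poly (pderiv p) x * ((1 - x\<^sup>2) * sqrt (1 - x\<^sup>2))
        = poly ?q x * sqrt (1 - x\<^sup>2)"
      by (simp add: algebra_simps power2_eq_square)
    ultimately show "(G has_vector_derivative poly ?q x * sqrt (1 - x\<^sup>2)) (at x)"
      by (simp add: has_real_derivative_iff_has_vector_derivative)
  qed simp
  moreover have "G 1 - G (-1) = 0"
    by (simp add: G_def)
  ultimately show ?thesis
    by (simp add: fpair_cheb_mom_eq_integral integral_unique)
qed

lemma cheb_mom_recurrence: "(real k + 3) * cheb_mom (Suc k) = real k * cheb_mom (k - 1)"
proof (cases k)
  case 0
  then show ?thesis
    using cheb_mom_pearson[of 1] by (simp add: fpair_def)
next
  case (Suc j)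
  have "[:1, 0, -1:] * pderiv (monom 1 k) - Polynomial.smult 3 ([:0, 1:] * monom 1 k)
      = monom (real k) j - monom (real k + 3) (Suc k)"
    unfolding Suc
    by (subst poly_eq_poly_eq_iff[symmetric]) (simp add: fun_eq_iff pderiv_monom poly_monom algebra_simps)
  then show ?thesis
    using cheb_mom_pearson[of "monom 1 k"] Suc by (simp add: fpair_diff fpair_monom)
qed

lemma cheb_mom_0: "cheb_mom 0 = pi / 2"
proof -
  define G where "G x = (x * sqrt (1 - x\<^sup>2) + arcsin x) / 2" for x :: real
  have "((\<lambda>x. x ^ 0 * sqrt (1 - x\<^sup>2)) has_integral G 1 - G (-1)) {-1..1}"
  proof (rule fundamental_theorem_of_calculus_interior)
    show "continuous_on {-1..1} G"
      unfolding G_def by (intro continuous_intros continuous_on_arcsin') auto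
    fix x :: real
    assume "x \<in> {-1<..<1}"
    then have x: "-1 < x" "x < 1"
      by auto
    then have pos: "0 < 1 - x\<^sup>2"
      by (simp add: abs_square_less_1)
    have "(G has_real_derivative
        (1 * sqrt (1 - x\<^sup>2) + x * (inverse (sqrt (1 - x\<^sup>2)) / 2 * - (2 * x)) + inverse (sqrt (1 - x\<^sup>2))) / 2) (at x)"
      unfolding G_def using x pos
      by (auto intro!: derivative_eq_intros DERIV_real_sqrt DERIV_chain2[where f = sqrt] DERIV_arcsin)
    also have "(1 * sqrt (1 - x\<^sup>2) + x * (inverse (sqrt (1 - x\<^sup>2)) / 2 * - (2 * x))
        + inverse (sqrt (1 - x\<^sup>2))) / 2 = x ^ 0 * sqrt (1 - x\<^sup>2)"
      using pos by (simp add: field_simps flip: real_sqrt_pow2) (simp add: power2_eq_square)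
    finally show "(G has_vector_derivative x ^ 0 * sqrt (1 - x\<^sup>2)) (at x)"
      by (simp only: has_real_derivative_iff_has_vector_derivative)
  qed simp
  then have "cheb_mom 0 = G 1 - G (-1)"
    unfolding cheb_mom_def by (rule integral_unique)
  then show ?thesis
    by (simp add: G_def)
qed

lemma cheb_mom_odd:
  assumes "odd n"
  shows "cheb_mom n = 0"
proof -
  have "cheb_mom (2 * k + 1) = 0" for k
  proof (induction k)
    case 0
    show ?case
      using cheb_mom_recurrence[of 0] by simp
  next
    case (Suc k)
    then show ?case
      using cheb_mom_recurrence[of "2 * k + 2"] by simp
  qed
  with assms show ?thesis
    by (auto elim: oddE)
qed

lemma cheb_mom_even: "cheb_mom (2 * k) = pi * (-1) ^ k * ((1/2) gchoose Suc k)"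
proof (induction k)
  case 0
  show ?case
    by (simp add: cheb_mom_0)
next
  case (Suc k)
  have binomial: "(2 * real k + 1) * ((1/2) gchoose Suc k) = - (2 * real k + 4) * ((1/2) gchoose Suc (Suc k))"
    using gbinomial_mult_1[of "1/2 :: real" "Suc k"] by (simp add: algebra_simps)
  have "(2 * real k + 4) * cheb_mom (2 * Suc k) = (2 * real k + 1) * cheb_mom (2 * k)"
    using cheb_mom_recurrence[of "2 * k + 1"] by (simp add: algebra_simps)
  also have "\<dots> = pi * (-1) ^ k * ((2 * real k + 1) * ((1/2) gchoose Suc k))"
    unfolding Suc.IH by (simp only: mult_ac)
  also have "\<dots> = (2 * real k + 4) * (pi * (-1) ^ Suc k * ((1/2) gchoose Suc (Suc k)))"
    by (simp only: binomial) (simp add: algebra_simps)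
  finally have "(2 * real k + 4) * cheb_mom (2 * Suc k)
      = (2 * real k + 4) * (pi * (-1) ^ Suc k * ((1/2) gchoose Suc (Suc k)))" .
  moreover have "2 * real k + 4 \<noteq> 0"
    by simp
  ultimately show ?case
    by (metis mult_left_cancel)
qed

lemma sum_atMost_double_even_indices:
  fixes f :: "nat \<Rightarrow> 'a :: comm_monoid_add"
  assumes "\<And>k. odd k \<Longrightarrow> f k = 0"
  shows "(\<Sum>k\<le>2 * K. f k) = (\<Sum>a\<le>K. f (2 * a))"
  by (induction K) (simp_all add: assms)

lemma half_gchoose_convolution:
  "(\<Sum>j\<le>K. ((1/2 :: real) gchoose Suc j) * ((1/2) gchoose Suc (K - j))) = - 2 * ((1/2) gchoose (K + 2))"
proof -
  define g where "g j = (1/2 :: real) gchoose j" for j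
  have "(\<Sum>j\<le>K + 2. g j * g (K + 2 - j)) = 1 gchoose (K + 2)"
    using gbinomial_Vandermonde[of "1/2 :: real" "1/2" "K + 2"] by (simp add: g_def atLeast0AtMost)
  also have "\<dots> = 0"
    using binomial_gbinomial[of 1 "K + 2", where 'a = real] by simp
  finally have "(\<Sum>j\<le>K + 2. g j * g (K + 2 - j)) = 0" .
  moreover have "(\<Sum>j\<le>K + 2. g j * g (K + 2 - j)) = 2 * g (K + 2) + (\<Sum>j\<le>K. g (Suc j) * g (Suc (K - j)))"
    unfolding add_2_eq_Suc' by (subst sum.atMost_Suc_shift, subst sum.atMost_Suc) (simp add: g_def Suc_diff_le)
  ultimately show ?thesis
    by (simp add: g_def)
qed

lemma cheb_mom_convolution: "(\<Sum>j\<le>N. cheb_mom j * cheb_mom (N - j)) = 2 * pi * cheb_mom (N + 2)"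
proof (cases "even N")
  case True
  then obtain K where N: "N = 2 * K"
    by blast
  have "(\<Sum>j\<le>N. cheb_mom j * cheb_mom (N - j)) = (\<Sum>a\<le>K. cheb_mom (2 * a) * cheb_mom (2 * (K - a)))"
    unfolding N by (subst sum_atMost_double_even_indices) (auto simp: cheb_mom_odd right_diff_distrib')
  also have "\<dots> = (\<Sum>a\<le>K. pi\<^sup>2 * (-1) ^ K * (((1/2) gchoose Suc a) * ((1/2) gchoose Suc (K - a))))"
  proof (rule sum.cong[OF refl])
    fix a
    assume "a \<in> {..K}"
    then have "(-1 :: real) ^ a * (-1) ^ (K - a) = (-1) ^ K"
      by (simp flip: power_add)
    then show "cheb_mom (2 * a) * cheb_mom (2 * (K - a))
        = pi\<^sup>2 * (-1) ^ K * (((1/2) gchoose Suc a) * ((1/2) gchoose Suc (K - a)))"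
      unfolding cheb_mom_even by (simp add: power2_eq_square mult_ac)
  qed
  also have "\<dots> = 2 * pi * cheb_mom (N + 2)"
    using cheb_mom_even[of "Suc K"]
    by (simp add: N flip: sum_distrib_left) (simp add: half_gchoose_convolution power2_eq_square)
  finally show ?thesis .
next
  case False
  have "cheb_mom j * cheb_mom (N - j) = 0" if "j \<le> N" for j
  proof (cases "even j")
    case True
    with False that have "odd (N - j)"
      by simp
    then show ?thesis
      by (simp add: cheb_mom_odd)
  qed (simp add: cheb_mom_odd)
  then have "(\<Sum>j\<le>N. cheb_mom j * cheb_mom (N - j)) = 0"
    by (intro sum.neutral) simp
  then show ?thesis
    using False by (simp add: cheb_mom_odd)
qed

section \<open>The inverse functional\<close>

lemma inv_mom_eqI:
  assumes "m 0 \<noteq> 0"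
    and convolution: "\<And>n. (\<Sum>k\<le>n. m (n - k) * v k) = (if n = 0 then 1 else 0)"
  shows "inv_mom m = v"
proof
  fix n
  show "inv_mom m n = v n"
  proof (induction n rule: less_induct)
    case (less n)
    show ?case
    proof (cases n)
      case 0
      then show ?thesis
        using convolution[of 0] \<open>m 0 \<noteq> 0\<close> by (simp add: field_simps)
    next
      case (Suc n')
      have "(\<Sum>k\<le>n'. m (Suc n' - k) * v k) + m 0 * v (Suc n') = 0"
        using convolution[of "Suc n'"] by simp
      moreover have "(\<Sum>k\<le>n'. m (Suc n' - k) * inv_mom m k) = (\<Sum>k\<le>n'. m (Suc n' - k) * v k)"
        using less Suc by (intro sum.cong) auto
      ultimately show ?thesis
        using Suc \<open>m 0 \<noteq> 0\<close> by (simp add: field_simps)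
    qed
  qed
qed

definition cheb_inv_mom :: "nat \<Rightarrow> real" where
  "cheb_inv_mom n = (if n = 0 then 2 / pi else if n = 1 then 0 else - cheb_mom (n - 2) / pi\<^sup>2)"

lemma inv_mom_cheb_mom: "inv_mom cheb_mom = cheb_inv_mom"
proof (rule inv_mom_eqI)
  show "cheb_mom 0 \<noteq> 0"
    by (simp add: cheb_mom_0)
  fix n
  show "(\<Sum>k\<le>n. cheb_mom (n - k) * cheb_inv_mom k) = (if n = 0 then 1 else 0)"
  proof (cases n rule: nat_0_1_or_Suc_Suc)
    case (3 N)
    have "(\<Sum>k\<le>N. cheb_mom (N - k) * cheb_inv_mom (Suc (Suc k)))
        = - (\<Sum>k\<le>N. cheb_mom k * cheb_mom (N - k)) / pi\<^sup>2"
      by (simp add: cheb_inv_mom_def sum_negf sum_divide_distrib mult.commute)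
    also have "\<dots> = - 2 / pi * cheb_mom (N + 2)"
      by (simp add: cheb_mom_convolution power2_eq_square)
    finally have "(\<Sum>k\<le>N. cheb_mom (N - k) * cheb_inv_mom (Suc (Suc k))) = - 2 / pi * cheb_mom (N + 2)" .
    moreover have "cheb_inv_mom 0 = 2 / pi" "cheb_inv_mom 1 = 0"
      by (simp_all add: cheb_inv_mom_def)
    ultimately show ?thesis
      unfolding 3 sum.atMost_Suc_shift[of _ "Suc N"] sum.atMost_Suc_shift[of _ N] by simp
  qed (simp_all add: cheb_inv_mom_def cheb_mom_0 cheb_mom_odd)
qed

lemma fpair_cheb_inv_mom:
  "fpair cheb_inv_mom p = 2 / pi * coeff p 0 - fpair cheb_mom (poly_shift 2 p) / pi\<^sup>2"
proof -
  define R where "R p = 2 / pi * coeff p 0 - fpair cheb_mom (poly_shift 2 p) / pi\<^sup>2" for p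
  have add: "R (p + q) = R p + R q" for p q
    by (simp add: R_def fpair_add poly_shift_add add_divide_distrib)
  have smult: "R (Polynomial.smult c p) = c * R p" for c p
    by (simp add: R_def fpair_smult poly_shift_smult right_diff_distrib)
  have monom: "R (monom 1 k) = cheb_inv_mom k" for k
    by (simp add: R_def fpair_monom poly_shift_monom cheb_inv_mom_def)
  have "fpair cheb_inv_mom p - R p = 0"
    by (rule linear_poly_functional_eq_0[of "\<lambda>p. fpair cheb_inv_mom p - R p"])
      (simp_all add: fpair_add fpair_smult fpair_monom add smult monom algebra_simps)
  then show ?thesis
    by (simp add: R_def)
qed

lemma fpair_cheb_inv_mom_integral:
  "fpair cheb_inv_mom p =
     - (1 / pi\<^sup>2) * integral {-1..1}
         (\<lambda>x. (poly p x - poly p 0 - poly (pderiv p) 0 * x) / x\<^sup>2 * sqrt (1 - x\<^sup>2))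
     + (2 / pi) * poly p 0"
proof -
  have "integral {-1..1} (\<lambda>x. (poly p x - poly p 0 - poly (pderiv p) 0 * x) / x\<^sup>2 * sqrt (1 - x\<^sup>2))
      = integral {-1..1} (\<lambda>x. poly (poly_shift 2 p) x * sqrt (1 - x\<^sup>2))"
  proof (rule integral_spike[of "{0}"])
    fix x :: real
    assume "x \<in> {-1..1} - {0}"
    moreover have "poly p x - poly p 0 - poly (pderiv p) 0 * x = x\<^sup>2 * poly (poly_shift 2 p) x"
      by (subst poly_eq_poly_shift_2) (simp add: poly_0_coeff_0 coeff_pderiv)
    ultimately show "poly (poly_shift 2 p) x * sqrt (1 - x\<^sup>2)
        = (poly p x - poly p 0 - poly (pderiv p) 0 * x) / x\<^sup>2 * sqrt (1 - x\<^sup>2)"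
      by simp
  qed simp
  then show ?thesis
    by (simp add: fpair_cheb_inv_mom fpair_cheb_mom_eq_integral poly_0_coeff_0)
qed

lemma stieltjes_cheb_inv_mom:
  "stieltjes cheb_inv_mom =
     fps_const (2 / pi) * fps_X - fps_const (1 / pi\<^sup>2) * fps_X ^ 2 * stieltjes cheb_mom"
proof (rule fps_ext)
  fix k
  have "fps_nth (fps_const (2 / pi) * fps_X - fps_const (1 / pi\<^sup>2) * fps_X ^ 2 * stieltjes cheb_mom) k
      = 2 / pi * (if k = 1 then 1 else 0) - 1 / pi\<^sup>2 * (if k < 2 then 0 else fps_nth (stieltjes cheb_mom) (k - 2))"
    by (simp add: mult.assoc fps_X_power_mult_nth)
  then show "fps_nth (stieltjes cheb_inv_mom) k
      = fps_nth (fps_const (2 / pi) * fps_X - fps_const (1 / pi\<^sup>2) * fps_X ^ 2 * stieltjes cheb_mom) k"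
    by (cases "k \<le> 2") (auto simp: stieltjes_def cheb_inv_mom_def le_Suc_eq numeral_2_eq_2)
qed

section \<open>Chebyshev polynomials of the second kind\<close>

lemma chebU_monic: "degree (chebU n) = n \<and> coeff (chebU n) n = 1"
proof (induction n rule: chebU.induct)
  case (3 n)
  have U: "chebU (Suc (Suc n)) = pCons 0 (chebU (Suc n)) + - Polynomial.smult (1/4) (chebU n)"
    by simp
  have "degree (pCons 0 (chebU (Suc n))) = Suc (Suc n)"
    using 3 by auto
  moreover have "degree (- Polynomial.smult (1/4) (chebU n)) < Suc (Suc n)"
    using 3 by simp
  ultimately have "degree (chebU (Suc (Suc n))) = Suc (Suc n)"
    unfolding U by (metis degree_add_eq_left)
  moreover have "coeff (chebU (Suc (Suc n))) (Suc (Suc n)) = 1"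
    using 3 by (simp add: coeff_eq_0)
  ultimately show ?case ..
qed simp_all

lemma chebU_pderiv:
  "[:1, 0, -1:] * pderiv (chebU (Suc n)) =
     Polynomial.smult ((real n + 2) / 2) (chebU n) - Polynomial.smult (real n + 1) ([:0, 1:] * chebU (Suc n))"
proof (induction n rule: induct_nat_012)
  case (ge2 k)
  show ?case
  proof (subst poly_eq_poly_eq_iff[symmetric], rule ext)
    fix x :: real
    define A B C D where "A = poly (chebU (Suc k)) x" and "B = poly (chebU k) x"
      and "C = poly (chebU (Suc (Suc k))) x" and "D = poly (chebU (Suc (Suc (Suc k)))) x"
    define A' C' D' where "A' = poly (pderiv (chebU (Suc k))) x"
      and "C' = poly (pderiv (chebU (Suc (Suc k)))) x" and "D' = poly (pderiv (chebU (Suc (Suc (Suc k))))) x"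
    have C: "C = x * A - B / 4" and D: "D = x * C - A / 4"
      by (simp_all only: A_def B_def C_def D_def chebU.simps(3)) simp_all
    have D': "D' = C + x * C' - A' / 4"
      unfolding A'_def C_def C'_def D'_def
      by (subst (1) chebU.simps(3)) (simp add: pderiv_diff pderiv_mult pderiv_smult pderiv_pCons)
    have A': "(1 - x * x) * A' = (real k + 2) / 2 * B - (real k + 1) * (x * A)"
      using arg_cong[OF ge2.IH(1), of "\<lambda>p. poly p x"] by (simp add: A_def B_def A'_def algebra_simps)
    have C': "(1 - x * x) * C' = (real k + 3) / 2 * A - (real k + 2) * (x * C)"
      using arg_cong[OF ge2.IH(2), of "\<lambda>p. poly p x"] by (simp add: A_def C_def C'_def algebra_simps)
    have "(1 - x * x) * D' = (1 - x * x) * C + x * ((1 - x * x) * C') - (1 - x * x) * A' / 4"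
      unfolding D' by (simp add: algebra_simps)
    also have "\<dots> = (real k + 4) / 2 * C - (real k + 3) * (x * D)"
      unfolding A' C' D C by (simp add: field_simps)
    finally show "poly ([:1, 0, -1:] * pderiv (chebU (Suc (Suc (Suc k))))) x =
        poly (Polynomial.smult ((real (Suc (Suc k)) + 2) / 2) (chebU (Suc (Suc k)))
          - Polynomial.smult (real (Suc (Suc k)) + 1) ([:0, 1:] * chebU (Suc (Suc (Suc k))))) x"
      by (simp add: C_def D_def D'_def algebra_simps)
  qed
qed (subst poly_eq_poly_eq_iff[symmetric], simp add: fun_eq_iff pderiv_pCons algebra_simps)+

lemma fpair_cheb_mom_chebU_Suc: "fpair cheb_mom (chebU (Suc n)) = 0"
proof (induction n rule: nat_induct2)
  case 0
  show ?case
    by (simp add: cheb_mom_odd)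
next
  case 1
  show ?case
    using cheb_mom_recurrence[of 1] by (simp add: fpair_def cheb_mom_0 numeral_2_eq_2)
next
  case (step n)
  have "[:1, 0, -1:] * pderiv (chebU (Suc (Suc n))) - Polynomial.smult 3 ([:0, 1:] * chebU (Suc (Suc n)))
      = Polynomial.smult ((real n + 1) / 4) (chebU (Suc n)) - Polynomial.smult (real n + 5) (chebU (Suc (Suc (Suc n))))"
    by (subst chebU_pderiv, subst poly_eq_poly_eq_iff[symmetric])
      (simp add: fun_eq_iff field_simps del: chebU.simps, simp add: field_simps)
  then show ?case
    using cheb_mom_pearson[of "chebU (Suc (Suc n))"] step
    by (simp add: fpair_diff fpair_smult add_nonneg_pos del: chebU.simps)
qed

lemma fpair_poly_shift_Suc_chebU:
  "fpair m (poly_shift (Suc k) (chebU (Suc (Suc n)))) =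
     fpair m (poly_shift k (chebU (Suc n))) - fpair m (poly_shift (Suc k) (chebU n)) / 4"
  by (simp only: chebU.simps(3) poly_shift_diff poly_shift_smult poly_shift_Suc_X_mult
      fpair_diff fpair_smult)

lemma coeff_0_chebU: "coeff (chebU (2 * j)) 0 = (-1/4) ^ j \<and> coeff (chebU (2 * j + 1)) 0 = 0"
  by (induction j) simp_all

lemma fpair_cheb_mom_poly_shift_1_chebU:
  "fpair cheb_mom (poly_shift 1 (chebU (2 * j))) = 0 \<and>
   fpair cheb_mom (poly_shift 1 (chebU (2 * j + 1))) = pi / 2 * (-1/4) ^ j"
proof (induction j)
  case 0
  show ?case
    using poly_shift_Suc_X_mult[of 0 "1 :: real poly"] by (simp add: poly_shift_1 cheb_mom_0)
next
  case (Suc j)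
  then show ?case
    by (simp add: fpair_poly_shift_Suc_chebU fpair_cheb_mom_chebU_Suc del: chebU.simps)
qed

lemma fpair_cheb_mom_poly_shift_2_chebU:
  "fpair cheb_mom (poly_shift 2 (chebU (2 * j))) = - 2 * pi * real j * (-1/4) ^ j \<and>
   fpair cheb_mom (poly_shift 2 (chebU (2 * j + 1))) = 0"
proof (induction j)
  case 0
  show ?case
    using poly_shift_Suc_X_mult[of 1 "1 :: real poly"] by (simp add: poly_shift_1 numeral_2_eq_2)
next
  case (Suc j)
  then show ?case
    using fpair_cheb_mom_poly_shift_1_chebU[of j] fpair_cheb_mom_poly_shift_1_chebU[of "Suc j"]
    by (simp add: numeral_2_eq_2 fpair_poly_shift_Suc_chebU field_simps del: chebU.simps)
qed

lemma fpair_cheb_inv_mom_chebU: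
  "fpair cheb_inv_mom (chebU (2 * j)) = 2 / pi * (real j + 1) * (-1/4) ^ j \<and>
   fpair cheb_inv_mom (chebU (2 * j + 1)) = 0"
  using coeff_0_chebU[of j] fpair_cheb_mom_poly_shift_2_chebU[of j]
  by (simp add: fpair_cheb_inv_mom field_simps power2_eq_square del: chebU.simps)

section \<open>The orthogonal polynomials of the inverse functional\<close>

lemma chebU_inv_Suc_Suc:
  "chebU_inv (Suc (Suc n)) = chebU (Suc (Suc n)) + Polynomial.smult (alpha_m (Suc (Suc n))) (chebU n)"
  by (simp add: chebU_inv_def del: chebU.simps)

lemma chebU_inv_monic: "degree (chebU_inv n) = n \<and> lead_coeff (chebU_inv n) = 1"
proof (cases n rule: nat_0_1_or_Suc_Suc)
  case (3 k)
  have "degree (Polynomial.smult (alpha_m (Suc (Suc k))) (chebU k)) < degree (chebU (Suc (Suc k)))"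
    using chebU_monic[of k] chebU_monic[of "Suc (Suc k)"] by (simp add: le_less_trans[OF degree_smult_le])
  then show ?thesis
    using chebU_monic[of k] chebU_monic[of "Suc (Suc k)"]
    by (simp add: 3 chebU_inv_Suc_Suc degree_add_eq_left coeff_eq_0 del: chebU.simps)
qed (simp_all add: chebU_inv_def)

lemma alpha_m_a_m_identities:
  "1/4 + alpha_m (k + 3) = alpha_m (k + 4) + a_m (k + 3)"
  "alpha_m (k + 3) / 4 = a_m (k + 3) * alpha_m (k + 2)"
proof -
  have "1/4 + alpha_m (k + 3) = alpha_m (k + 4) + a_m (k + 3) \<and>
      alpha_m (k + 3) / 4 = a_m (k + 3) * alpha_m (k + 2)"
  proof (cases "even k")
    case True
    then have coeffs: "alpha_m (k + 3) = 1/4" "alpha_m (k + 4) = (real k + 6) / (4 * (real k + 4))"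
      "a_m (k + 3) = (real k + 2) / (4 * (real k + 4))" "alpha_m (k + 2) = (real k + 4) / (4 * (real k + 2))"
      by (simp_all add: alpha_m_def a_m_def algebra_simps)
    show ?thesis
      unfolding coeffs by (simp add: divide_simps) (simp add: algebra_simps)
  next
    case False
    then have "alpha_m (k + 4) = 1/4" "alpha_m (k + 2) = 1/4" "a_m (k + 3) = alpha_m (k + 3)"
      by (simp_all add: alpha_m_def a_m_def)
    then show ?thesis
      by simp
  qed
  then show "1/4 + alpha_m (k + 3) = alpha_m (k + 4) + a_m (k + 3)"
    "alpha_m (k + 3) / 4 = a_m (k + 3) * alpha_m (k + 2)"
    by auto
qed

lemma chebU_inv_recurrence:
  assumes "n \<ge> 1"
  shows "[:0, 1:] * chebU_inv n = chebU_inv (Suc n) + Polynomial.smult (a_m n) (chebU_inv (n - 1))"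
proof -
  consider "n = 1" | "n = 2" | k where "n = k + 3"
  proof (cases n rule: nat_0_1_or_Suc_Suc)
    case (3 k)
    then show thesis
      using that by (cases k) (simp_all add: numeral_2_eq_2 numeral_3_eq_3)
  qed (use assms that in simp_all)
  then show ?thesis
  proof cases
    case 3
    have "[:0, 1:] * chebU_inv (k + 3) = chebU (k + 4)
        + Polynomial.smult (1/4 + alpha_m (k + 3)) (chebU (k + 2))
        + Polynomial.smult (alpha_m (k + 3) / 4) (chebU k)"
      by (subst poly_eq_poly_eq_iff[symmetric])
        (simp add: fun_eq_iff chebU_inv_Suc_Suc eval_nat_numeral chebU.simps(3)[of k]
          chebU.simps(3)[of "Suc (Suc k)"] algebra_simps del: chebU.simps)
    also have "\<dots> = chebU_inv (k + 4) + Polynomial.smult (a_m (k + 3)) (chebU_inv (k + 2))"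
      unfolding alpha_m_a_m_identities
      by (subst poly_eq_poly_eq_iff[symmetric])
        (simp add: fun_eq_iff chebU_inv_Suc_Suc eval_nat_numeral algebra_simps del: chebU.simps)
    finally show ?thesis
      using 3 by (simp add: eval_nat_numeral)
  next
    case 1
    have "chebU 2 = [:-1/4, 0, 1:]"
      by (simp add: numeral_2_eq_2)
    then show ?thesis
      using 1 by (simp add: chebU_inv_def alpha_m_def a_m_def)
  next
    case 2
    have "chebU 2 = [:-1/4, 0, 1:]" "chebU 3 = [:0, -1/2, 0, 1:]"
      by (simp_all add: numeral_2_eq_2 numeral_3_eq_3)
    then show ?thesis
      using 2 by (simp add: chebU_inv_def alpha_m_def a_m_def)
  qed
qed

lemma fpair_cheb_inv_mom_chebU_inv:
  assumes "n \<ge> 1"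
  shows "fpair cheb_inv_mom (chebU_inv n) = 0"
proof (cases n rule: nat_0_1_or_Suc_Suc)
  case 2
  then show ?thesis
    by (simp add: chebU_inv_def cheb_inv_mom_def)
next
  case (3 k)
  then have "fpair cheb_inv_mom (chebU_inv n)
      = fpair cheb_inv_mom (chebU (Suc (Suc k))) + alpha_m (Suc (Suc k)) * fpair cheb_inv_mom (chebU k)"
    by (simp only: chebU_inv_Suc_Suc fpair_add fpair_smult)
  also have "\<dots> = 0"
  proof (cases "even k")
    case True
    then obtain j where k: "k = 2 * j"
      by blast
    have alpha: "alpha_m (Suc (Suc k)) = (real j + 2) / (4 * (real j + 1))"
      by (simp add: alpha_m_def k divide_simps) (simp add: algebra_simps)
    have U2: "fpair cheb_inv_mom (chebU (Suc (Suc k))) = 2 / pi * (real j + 2) * (-1/4) ^ Suc j"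
      using fpair_cheb_inv_mom_chebU[of "Suc j"] by (simp add: k del: chebU.simps)
    have U0: "fpair cheb_inv_mom (chebU k) = 2 / pi * (real j + 1) * (-1/4) ^ j"
      using fpair_cheb_inv_mom_chebU[of j] by (simp add: k)
    show ?thesis
      unfolding alpha U2 U0 by (simp add: divide_simps) (simp add: algebra_simps)
  next
    case False
    then obtain j where "k = 2 * j + 1"
      by (blast elim: oddE)
    then show ?thesis
      using fpair_cheb_inv_mom_chebU[of j] fpair_cheb_inv_mom_chebU[of "Suc j"] by simp
  qed
  finally show ?thesis .
qed (use assms in simp)

lemma a_m_nonzero: "n \<ge> 1 \<Longrightarrow> a_m n \<noteq> 0"
  by (auto simp: a_m_def)

theorem mainTheorem15:
  shows "(\<forall>p :: real poly. fpair (inv_mom cheb_mom) p =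
            - (1 / pi\<^sup>2) * integral {-1..1}
                (\<lambda>x. (poly p x - poly p 0 - poly (pderiv p) 0 * x) / x\<^sup>2 * sqrt (1 - x\<^sup>2))
            + (2 / pi) * poly p 0)
       \<and> quasi_definite (inv_mom cheb_mom)
       \<and> is_MOPS (inv_mom cheb_mom) chebU_inv
       \<and> [:0, 1:] * chebU_inv 0 = chebU_inv 1
       \<and> (\<forall>n\<ge>1. [:0, 1:] * chebU_inv n = chebU_inv (Suc n) + Polynomial.smult (a_m n) (chebU_inv (n - 1)))
       \<and> stieltjes (inv_mom cheb_mom) =
           fps_const (2 / pi) * fps_X - fps_const (1 / pi\<^sup>2) * fps_X ^ 2 * stieltjes cheb_mom"
proof -
  have X_chebU_inv_0: "[:0, 1:] * chebU_inv 0 = chebU_inv 1"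
    by (simp add: chebU_inv_def)
  have "is_MOPS cheb_inv_mom chebU_inv"
  proof (rule is_MOPS_of_recurrence[OF chebU_inv_monic _ X_chebU_inv_0])
    show "chebU_inv 0 = 1"
      by (simp add: chebU_inv_def)
    show "\<forall>n\<ge>1. [:0, 1:] * chebU_inv n = chebU_inv (Suc n) + Polynomial.smult (a_m n) (chebU_inv (n - 1))"
      using chebU_inv_recurrence by blast
    show "cheb_inv_mom 0 \<noteq> 0"
      by (simp add: cheb_inv_mom_def)
  qed (simp_all add: fpair_cheb_inv_mom_chebU_inv a_m_nonzero)
  then show ?thesis
    unfolding inv_mom_cheb_mom
    using fpair_cheb_inv_mom_integral is_MOPS_imp_quasi_definite X_chebU_inv_0 chebU_inv_recurrence
      stieltjes_cheb_inv_mom by blast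
qed

end
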